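(* Let $G=(V,E,w)$ be an undirected graph on $n$ nodes with positive edge weights, let $k$ be an integer with $1\le k\le n$, and let $\mathbf{A}\in\{\mathbf{A}_D,\mathbf{A}_P\}$. Let $c\in[0,1)$ and $\boldsymbol{\epsilon}\in[-c,1-c]^n$, and let the innate opinions be $\mathbf{s}_0=c\mathbf{1}+\boldsymbol{\epsilon}$. Let $\gamma_1,\gamma_2,\gamma_3\in(0,1)$ and assume that for all sets $X\subseteq V$ with $|X|=k$: (1) $(\mathbf{s}_X-\mathbf{s}_0)^{\intercal}\mathbf{A}\mathbf{s}_0\ge-\gamma_1\,\mathbf{s}_0^{\intercal}\mathbf{A}\mathbf{s}_0$; (2) $\boldsymbol{\epsilon}_{|X}^{\intercal}\mathbf{A}\boldsymbol{\epsilon}_{|X}\le\gamma_2\,\mathbf{s}_0^{\intercal}\mathbf{A}\mathbf{s}_0$; (3) $|\boldsymbol{\epsilon}_{|X}^{\intercal}\mathbf{A}\mathbf{1}_{|X}|\le\gamma_3\,\mathbf{s}_0^{\intercal}\mathbf{A}\mathbf{s}_0$. Suppose we have access to a $\beta$-approximation algorithm for the limited-information problem (L) below. Then one can compute a feasible solution for the full-information problem (F) below whose objective value is at least $\frac14\min\left\{\beta,\frac{1-2\gamma_1-2(1-c)\gamma_3}{1+2(1-c)\gamma_3+\gamma_2}\right\}$ times the optimal value of (F), using only the graph $G$ (and $k$) but not the opinions $\mathbf{s}_0$.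
   Context: $\mathbf{L}$ is the Laplacian of $G$ ($\mathbf{L}=\mathbf{D}-\mathbf{W}$ with $\mathbf{W}$ the weighted adjacency matrix and $\mathbf{D}$ the diagonal weighted degree matrix), $\mathbf{A}_D=(\mathbf{L}+\mathbf{I})^{-1}\mathbf{L}(\mathbf{L}+\mathbf{I})^{-1}$ (disagreement) and $\mathbf{A}_P=(\mathbf{I}+\mathbf{L})^{-1}(\mathbf{I}-\frac{\mathbf{1}\mathbf{1}^{\intercal}}{n})(\mathbf{I}+\mathbf{L})^{-1}$ (polarization); $\mathbf{1}$ is the all-ones vector. For $X\subseteq V$, $\mathbf{s}_X\in[0,1]^n$ is given by $\mathbf{s}_X(u)=1$ if $u\in X$ and $\mathbf{s}_X(u)=\mathbf{s}_0(u)$ otherwise; for a vector $\mathbf{v}$, $\mathbf{v}_{|X}(u)=\mathbf{v}(u)$ if $u\in X$ and $0$ otherwise. Problem (F) (full information; input $G$, $\mathbf{s}_0$, $k$): maximize $\mathbf{s}^{\intercal}\mathbf{A}\mathbf{s}$ subject to $\|\mathbf{s}-\mathbf{s}_0\|_0=k$ and $\mathbf{s}(u)\in\{\mathbf{s}_0(u),1\}$ for all $u\in V$. Problem (L) (limited information; input $G$, $k$): maximize $\mathbf{s}^{\intercal}\mathbf{A}\mathbf{s}$ subject to $\|\mathbf{s}\|_0=k$ and $\mathbf{s}\in[0,1]^n$. A $\beta$-approximation algorithm ($\beta\in(0,1]$) for (L) outputs a set $X\subseteq V$ with $|X|=k$ whose indicator vector $\mathbf{1}_{|X}$ attains value at least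 $\beta$ times the optimum of (L). *)

theory Defs
  imports "HOL-Analysis.Analysis"
begin

text \<open>Vertices are the elements of a finite type 'n (so n = CARD('n)); a weighted
undirected graph is given by its weighted adjacency matrix W.\<close>

definition weighted_graph :: "real^'n^'n \<Rightarrow> bool" where
  "weighted_graph W \<longleftrightarrow> (\<forall>i j. W $ i $ j = W $ j $ i \<and> W $ i $ j \<ge> 0) \<and> (\<forall>i. W $ i $ i = 0)"

definition degree_matrix :: "real^'n^'n \<Rightarrow> real^'n^'n" where
  "degree_matrix W = (\<chi> i j. if i = j then (\<Sum>l\<in>UNIV. W $ i $ l) else 0)"

definition laplacian :: "real^'n^'n \<Rightarrow> real^'n^'n" where
  "laplacian W = degree_matrix W - W"

definition A_D :: "real^'n^'n \<Rightarrow> real^'n^'n" where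
  "A_D W = matrix_inv (laplacian W + mat 1) ** laplacian W ** matrix_inv (laplacian W + mat 1)"

definition A_P :: "real^'n^'n \<Rightarrow> real^'n^'n" where
  "A_P W = matrix_inv (mat 1 + laplacian W)
           ** (mat 1 - (1 / real CARD('n)) *\<^sub>R (\<chi> i j. 1))
           ** matrix_inv (mat 1 + laplacian W)"

definition quad :: "real^'n^'n \<Rightarrow> real^'n \<Rightarrow> real" where
  "quad A s = s \<bullet> (A *v s)"

definition set_to_one :: "real^'n \<Rightarrow> 'n set \<Rightarrow> real^'n" where
  "set_to_one s0 X = (\<chi> u. if u \<in> X then 1 else s0 $ u)"

definition restr :: "real^'n \<Rightarrow> 'n set \<Rightarrow> real^'n" where
  "restr v X = (\<chi> u. if u \<in> X then v $ u else 0)"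

definition feasible_F :: "real^'n \<Rightarrow> nat \<Rightarrow> real^'n \<Rightarrow> bool" where
  "feasible_F s0 k s \<longleftrightarrow> card {u. s $ u \<noteq> s0 $ u} = k \<and> (\<forall>u. s $ u = s0 $ u \<or> s $ u = 1)"

definition feasible_L :: "nat \<Rightarrow> real^'n \<Rightarrow> bool" where
  "feasible_L k s \<longleftrightarrow> card {u. s $ u \<noteq> 0} = k \<and> (\<forall>u. 0 \<le> s $ u \<and> s $ u \<le> 1)"

text \<open>X is an admissible output of a beta-approximation algorithm for (L):
|X| = k and its indicator vector attains at least beta times the optimum (supremum) of (L).\<close>
definition beta_approx_L :: "real^'n^'n \<Rightarrow> nat \<Rightarrow> real \<Rightarrow> 'n set \<Rightarrow> bool" where
  "beta_approx_L A k \<beta> X \<longleftrightarrow> card X = k \<and>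
     (\<forall>s. feasible_L k s \<longrightarrow> quad A (restr (vec 1) X) \<ge> \<beta> * quad A s)"

end

theory Submission
  imports Defs
begin

text \<open>Both A_D and A_P have the form M B M with M = (I + L)^-1 symmetric and B positive
semidefinite (the Laplacian, resp. the centering projection), so the objective s^T A s is a
positive semidefinite quadratic form. Write s_Y - s_0 = (1 - c) 1_Y - eps_Y. Expanding
s_X = s_0 + (s_X - s_0), conditions (1) and (3) give
  s_X^T A s_X >= (1 - 2 gamma1 - 2 (1 - c) gamma3) s_0^T A s_0 + (1 - c)^2 1_X^T A 1_X,
while the parallelogram inequality together with (2) and (3) bounds every feasible solution
s_Y of (F) by
  s_Y^T A s_Y <= 2 ((1 + 2 (1 - c) gamma3 + gamma2) s_0^T A s_0 + (1 - c)^2 1_Y^T A 1_Y).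
As 1_Y is feasible for (L), 1_X^T A 1_X >= beta 1_Y^T A 1_Y, and comparing the two bounds
term by term gives the claimed ratio, even with 1/2 in place of 1/4.\<close>

definition pos_semidef :: "real^'n^'n \<Rightarrow> bool" where
  "pos_semidef A \<longleftrightarrow> transpose A = A \<and> (\<forall>x. 0 \<le> quad A x)"

lemma pos_semidef_quad_nonneg: "pos_semidef A \<Longrightarrow> 0 \<le> quad A x"
  by (simp add: pos_semidef_def)

lemma inner_matrix_vector_commute:
  fixes A :: "real^'n^'n"
  assumes "transpose A = A"
  shows "x \<bullet> (A *v y) = y \<bullet> (A *v x)"
proof -
  have "x \<bullet> (A *v y) = (transpose A *v x) \<bullet> y" by (simp add: dot_lmul_matrix)
  then show ?thesis using assms by (simp add: inner_commute)
qed

lemma matrix_inv_inverse: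
  fixes M :: "real^'n^'n"
  assumes "invertible M"
  shows "M ** matrix_inv M = mat 1" "matrix_inv M ** M = mat 1"
  using someI_ex[OF assms[unfolded invertible_def]] unfolding matrix_inv_def by auto

lemma transpose_matrix_inv_symmetric:
  fixes M :: "real^'n^'n"
  assumes "invertible M" "transpose M = M"
  shows "transpose (matrix_inv M) = matrix_inv M"
proof -
  let ?M' = "matrix_inv M"
  have "transpose ?M' ** M = mat 1"
    by (metis assms(2) matrix_inv_inverse(1)[OF assms(1)] matrix_transpose_mul transpose_mat)
  then have "transpose ?M' = transpose ?M' ** (M ** ?M')"
    by (simp add: matrix_inv_inverse[OF assms(1)] matrix_mul_rid)
  also have "\<dots> = ?M'"
    by (simp add: \<open>transpose ?M' ** M = mat 1\<close> matrix_mul_assoc matrix_mul_lid)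
  finally show ?thesis .
qed

lemma pos_semidef_congruence:
  fixes M B :: "real^'n^'n"
  assumes "transpose M = M" "pos_semidef B"
  shows "pos_semidef (M ** B ** M)"
  unfolding pos_semidef_def
proof
  show "transpose (M ** B ** M) = M ** B ** M"
    using assms by (simp add: pos_semidef_def matrix_transpose_mul matrix_mul_assoc)
  show "\<forall>x. 0 \<le> quad (M ** B ** M) x"
  proof
    fix x :: "real^'n"
    have "quad (M ** B ** M) x = (transpose M *v x) \<bullet> (B *v (M *v x))"
      by (simp add: quad_def matrix_vector_mul_assoc[symmetric] matrix_mul_assoc dot_lmul_matrix)
    also have "\<dots> = quad B (M *v x)" using assms(1) by (simp add: quad_def)
    finally show "0 \<le> quad (M ** B ** M) x" using assms(2) by (simp add: pos_semidef_def)
  qed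
qed

lemma invertible_pos_semidef_plus_id:
  fixes M :: "real^'n^'n"
  assumes "pos_semidef M"
  shows "invertible (M + mat 1)"
proof -
  have "x = 0" if "(M + mat 1) *v x = 0" for x
  proof -
    have "quad M x + x \<bullet> x = 0"
      using that by (simp add: quad_def matrix_vector_mult_add_rdistrib inner_add_right[symmetric])
    then show "x = 0" using assms by (simp add: pos_semidef_def add_nonneg_eq_0_iff)
  qed
  then show ?thesis
    using matrix_left_invertible_ker invertible_left_inverse by blast
qed

lemma laplacian_mult_vec_nth:
  "(laplacian W *v x) $ i = (\<Sum>j\<in>UNIV. W $ i $ j * (x $ i - x $ j))"
proof -
  have "(degree_matrix W *v x) $ i = (\<Sum>j\<in>UNIV. W $ i $ j) * x $ i"
    unfolding degree_matrix_def matrix_vector_mult_def by (simp add: mult_delta_left)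
  then show ?thesis
    by (simp add: laplacian_def matrix_vector_mult_diff_rdistrib matrix_vector_mult_def
        sum_distrib_left sum_subtractf right_diff_distrib mult.commute)
qed

lemma quad_laplacian:
  assumes "\<And>i j. W $ i $ j = W $ j $ i"
  shows "2 * quad (laplacian W) x = (\<Sum>i\<in>UNIV. \<Sum>j\<in>UNIV. W $ i $ j * (x $ i - x $ j)\<^sup>2)"
proof -
  have q: "quad (laplacian W) x = (\<Sum>i\<in>UNIV. \<Sum>j\<in>UNIV. W $ i $ j * (x $ i * x $ i - x $ i * x $ j))"
    by (simp add: quad_def inner_vec_def laplacian_mult_vec_nth sum_distrib_left algebra_simps)
  have swap: "\<dots> = (\<Sum>i\<in>UNIV. \<Sum>j\<in>UNIV. W $ i $ j * (x $ j * x $ j - x $ j * x $ i))"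
    by (subst sum.swap) (simp add: assms)
  have "2 * quad (laplacian W) x = quad (laplacian W) x + quad (laplacian W) x" by simp
  also have "\<dots> = (\<Sum>i\<in>UNIV. \<Sum>j\<in>UNIV. W $ i $ j * (x $ i * x $ i - x $ i * x $ j)
      + W $ i $ j * (x $ j * x $ j - x $ j * x $ i))"
    by (subst (2) q, subst q, subst swap) (simp add: sum.distrib)
  finally show ?thesis by (simp add: algebra_simps power2_eq_square)
qed

lemma laplacian_pos_semidef:
  assumes "weighted_graph W"
  shows "pos_semidef (laplacian W)"
proof -
  have W: "W $ i $ j = W $ j $ i" "0 \<le> W $ i $ j" for i j
    using assms by (auto simp: weighted_graph_def)
  have "transpose (laplacian W) = laplacian W"
    using W(1) by (simp add: laplacian_def degree_matrix_def transpose_def vec_eq_iff)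
  moreover have "0 \<le> quad (laplacian W) x" for x
  proof -
    have "0 \<le> (\<Sum>i\<in>UNIV. \<Sum>j\<in>UNIV. W $ i $ j * (x $ i - x $ j)\<^sup>2)"
      by (intro sum_nonneg mult_nonneg_nonneg W(2)) simp
    then show ?thesis using quad_laplacian[of W x] W(1) by simp
  qed
  ultimately show ?thesis by (simp add: pos_semidef_def)
qed

lemma centering_pos_semidef:
  "pos_semidef (mat 1 - (1 / real CARD('n)) *\<^sub>R (\<chi> i j. 1) :: real^'n^'n)"
  unfolding pos_semidef_def
proof (intro conjI allI)
  show "transpose (mat 1 - (1 / real CARD('n)) *\<^sub>R (\<chi> i j. 1) :: real^'n^'n)
      = mat 1 - (1 / real CARD('n)) *\<^sub>R (\<chi> i j. 1)"
    by (simp add: transpose_def vec_eq_iff mat_def)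
  fix x :: "real^'n"
  have "((\<chi> i j. 1) :: real^'n^'n) *v x = (x \<bullet> vec 1) *\<^sub>R vec 1"
    by (simp add: matrix_vector_mult_def vec_eq_iff inner_vec_def)
  then have "quad (mat 1 - (1 / real CARD('n)) *\<^sub>R (\<chi> i j. 1)) x
      = x \<bullet> x - (x \<bullet> vec 1)\<^sup>2 / real CARD('n)"
    by (simp add: quad_def matrix_vector_mult_diff_rdistrib inner_diff_right
        scaleR_matrix_vector_assoc[symmetric] power2_eq_square inner_commute)
  moreover have "(x \<bullet> vec 1)\<^sup>2 \<le> (x \<bullet> x) * real CARD('n)"
    using Cauchy_Schwarz_ineq[of x "vec 1"] by (simp add: inner_vec_def)
  ultimately have "0 \<le> real CARD('n) * quad (mat 1 - (1 / real CARD('n)) *\<^sub>R (\<chi> i j. 1)) x"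
    by (simp add: field_simps)
  then show "0 \<le> quad (mat 1 - (1 / real CARD('n)) *\<^sub>R (\<chi> i j. 1)) x"
    by (simp add: zero_le_mult_iff)
qed

lemma opinion_matrix_pos_semidef:
  assumes "weighted_graph W" "A = A_D W \<or> A = A_P W"
  shows "pos_semidef A"
proof -
  let ?M = "matrix_inv (laplacian W + mat 1)"
  have "transpose (laplacian W + mat 1) = laplacian W + mat 1"
    using laplacian_pos_semidef[OF assms(1)] by (simp add: pos_semidef_def transpose_def vec_eq_iff mat_def)
  then have "transpose ?M = ?M"
    by (intro transpose_matrix_inv_symmetric invertible_pos_semidef_plus_id laplacian_pos_semidef assms(1))
  then show ?thesis
    using assms(2) pos_semidef_congruence laplacian_pos_semidef[OF assms(1)] centering_pos_semidef
    by (auto simp: A_D_def A_P_def add.commute)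
qed

lemma quad_add:
  fixes A :: "real^'n^'n"
  assumes "transpose A = A"
  shows "quad A (a + b) = quad A a + 2 * (b \<bullet> (A *v a)) + quad A b"
  using inner_matrix_vector_commute[OF assms, of a b]
  by (simp add: quad_def matrix_vector_right_distrib inner_add_left inner_add_right)

lemma quad_diff:
  fixes A :: "real^'n^'n"
  assumes "transpose A = A"
  shows "quad A (a - b) = quad A a - 2 * (b \<bullet> (A *v a)) + quad A b"
  using inner_matrix_vector_commute[OF assms, of a b]
  by (simp add: quad_def matrix_vector_mult_diff_distrib inner_diff_left inner_diff_right)

lemma quad_scaleR: "quad A (r *\<^sub>R a) = r\<^sup>2 * quad A a"
  by (simp add: quad_def matrix_vector_mult_scaleR power2_eq_square)

lemma quad_add_le:
  assumes "pos_semidef A"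
  shows "quad A (a + b) \<le> 2 * quad A a + 2 * quad A b"
proof -
  have "0 \<le> quad A (a - b)" using assms by (rule pos_semidef_quad_nonneg)
  then show ?thesis using assms by (simp add: pos_semidef_def quad_add quad_diff)
qed

lemma set_to_one_diff:
  "set_to_one (c *\<^sub>R vec 1 + eps) Y - (c *\<^sub>R vec 1 + eps) = (1 - c) *\<^sub>R restr (vec 1) Y - restr eps Y"
  by (simp add: set_to_one_def restr_def vec_eq_iff)

lemma quad_set_to_one_diff:
  fixes A :: "real^'n^'n"
  assumes "transpose A = A"
  shows "quad A (set_to_one (c *\<^sub>R vec 1 + eps) Y - (c *\<^sub>R vec 1 + eps))
    = (1 - c)\<^sup>2 * quad A (restr (vec 1) Y) - 2 * ((1 - c) * (restr eps Y \<bullet> (A *v restr (vec 1) Y)))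
      + quad A (restr eps Y)"
  unfolding set_to_one_diff quad_diff[OF assms] quad_scaleR by (simp add: matrix_vector_mult_scaleR)

lemma min_ratio_bound:
  fixes N D \<beta> q0 a qX qY qs qsX :: real
  assumes "0 < D" "0 \<le> q0" "0 \<le> a" "0 \<le> qY" "0 \<le> qs" "0 \<le> qsX"
    and lower: "N * q0 + a * qX \<le> qsX" and approx: "\<beta> * qY \<le> qX"
    and upper: "qs \<le> 2 * (D * q0 + a * qY)"
  shows "min \<beta> (N / D) * qs \<le> 2 * qsX"
proof (cases "min \<beta> (N / D) < 0")
  case True
  then show ?thesis
    using mult_nonpos_nonneg[of "min \<beta> (N / D)" qs] \<open>0 \<le> qs\<close> \<open>0 \<le> qsX\<close> by linarith
next
  case False
  define m where "m = min \<beta> (N / D)"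
  have "0 \<le> m" using False unfolding m_def by linarith
  have "m * D \<le> N" using \<open>0 < D\<close> by (simp add: m_def pos_le_divide_eq[symmetric])
  then have "m * D * q0 \<le> N * q0" using \<open>0 \<le> q0\<close> by (rule mult_right_mono)
  moreover have "m * qY \<le> qX"
    using approx mult_right_mono[of m \<beta> qY] \<open>0 \<le> qY\<close> by (simp add: m_def)
  then have "a * (m * qY) \<le> a * qX" using \<open>0 \<le> a\<close> by (rule mult_left_mono)
  ultimately have "m * (D * q0 + a * qY) \<le> qsX" using lower by (simp add: algebra_simps)
  moreover have "m * qs \<le> m * (2 * (D * q0 + a * qY))" using upper \<open>0 \<le> m\<close> by (rule mult_left_mono)
  ultimately show ?thesis by (simp add: m_def algebra_simps)
qed

lemma quad_set_to_one_lower_bound: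
  fixes A :: "real^'n^'n"
  assumes s0: "s0 = c *\<^sub>R vec 1 + eps" and A: "pos_semidef A" and c: "c \<le> 1"
    and h1: "(set_to_one s0 X - s0) \<bullet> (A *v s0) \<ge> - \<gamma>1 * quad A s0"
    and h3: "\<bar>restr eps X \<bullet> (A *v restr (vec 1) X)\<bar> \<le> \<gamma>3 * quad A s0"
  shows "(1 - 2*\<gamma>1 - 2*(1-c)*\<gamma>3) * quad A s0 + (1 - c)\<^sup>2 * quad A (restr (vec 1) X)
    \<le> quad A (set_to_one s0 X)"
proof -
  have sym: "transpose A = A" using A by (simp add: pos_semidef_def)
  have "quad A (set_to_one s0 X)
      = quad A s0 + 2 * ((set_to_one s0 X - s0) \<bullet> (A *v s0)) + quad A (set_to_one s0 X - s0)"
    using quad_add[OF sym, of s0 "set_to_one s0 X - s0"] by simp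
  moreover have "(1 - c) * (restr eps X \<bullet> (A *v restr (vec 1) X)) \<le> (1 - c) * (\<gamma>3 * quad A s0)"
    using c h3 by (intro mult_left_mono) auto
  moreover have "0 \<le> quad A (restr eps X)" using A by (rule pos_semidef_quad_nonneg)
  ultimately have "quad A s0 - 2 * \<gamma>1 * quad A s0 - 2 * ((1 - c) * (\<gamma>3 * quad A s0))
      + (1 - c)\<^sup>2 * quad A (restr (vec 1) X) \<le> quad A (set_to_one s0 X)"
    using h1 unfolding s0 quad_set_to_one_diff[OF sym] by linarith
  then show ?thesis by (simp add: algebra_simps)
qed

lemma quad_set_to_one_upper_bound:
  fixes A :: "real^'n^'n"
  assumes s0: "s0 = c *\<^sub>R vec 1 + eps" and A: "pos_semidef A" and c: "c \<le> 1"
    and h2: "quad A (restr eps Y) \<le> \<gamma>2 * quad A s0"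
    and h3: "\<bar>restr eps Y \<bullet> (A *v restr (vec 1) Y)\<bar> \<le> \<gamma>3 * quad A s0"
  shows "quad A (set_to_one s0 Y)
    \<le> 2 * ((1 + 2*(1-c)*\<gamma>3 + \<gamma>2) * quad A s0 + (1 - c)\<^sup>2 * quad A (restr (vec 1) Y))"
proof -
  have sym: "transpose A = A" using A by (simp add: pos_semidef_def)
  have "quad A (set_to_one s0 Y) \<le> 2 * quad A s0 + 2 * quad A (set_to_one s0 Y - s0)"
    using quad_add_le[OF A, of s0 "set_to_one s0 Y - s0"] by simp
  moreover have "- ((1 - c) * (restr eps Y \<bullet> (A *v restr (vec 1) Y))) \<le> (1 - c) * (\<gamma>3 * quad A s0)"
    using mult_left_mono[of "- (restr eps Y \<bullet> (A *v restr (vec 1) Y))" "\<gamma>3 * quad A s0" "1 - c"] c h3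
    by simp
  ultimately have "quad A (set_to_one s0 Y) \<le> 2 * quad A s0 + 2 * ((1 - c)\<^sup>2 * quad A (restr (vec 1) Y)
      + 2 * ((1 - c) * (\<gamma>3 * quad A s0)) + \<gamma>2 * quad A s0)"
    using h2 unfolding s0 quad_set_to_one_diff[OF sym] by argo
  then show ?thesis by (simp add: algebra_simps)
qed

lemma quad_set_to_one_ratio:
  fixes A :: "real^'n^'n"
  assumes s0: "s0 = c *\<^sub>R vec 1 + eps" and A: "pos_semidef A" and c: "c \<le> 1"
    and \<gamma>: "0 \<le> \<gamma>2" "0 \<le> \<gamma>3"
    and h1: "(set_to_one s0 X - s0) \<bullet> (A *v s0) \<ge> - \<gamma>1 * quad A s0"
    and h2: "quad A (restr eps Y) \<le> \<gamma>2 * quad A s0"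
    and h3: "\<bar>restr eps X \<bullet> (A *v restr (vec 1) X)\<bar> \<le> \<gamma>3 * quad A s0"
      "\<bar>restr eps Y \<bullet> (A *v restr (vec 1) Y)\<bar> \<le> \<gamma>3 * quad A s0"
    and approx: "\<beta> * quad A (restr (vec 1) Y) \<le> quad A (restr (vec 1) X)"
  shows "min \<beta> ((1 - 2*\<gamma>1 - 2*(1-c)*\<gamma>3) / (1 + 2*(1-c)*\<gamma>3 + \<gamma>2)) * quad A (set_to_one s0 Y)
    \<le> 2 * quad A (set_to_one s0 X)"
proof -
  have "0 < 1 + 2*(1-c)*\<gamma>3 + \<gamma>2" using c \<gamma> by (simp add: add_pos_nonneg)
  then show ?thesis
    using min_ratio_bound[OF _ pos_semidef_quad_nonneg[OF A] zero_le_power2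
        pos_semidef_quad_nonneg[OF A] pos_semidef_quad_nonneg[OF A] pos_semidef_quad_nonneg[OF A]
        quad_set_to_one_lower_bound[OF s0 A c h1 h3(1)] approx
        quad_set_to_one_upper_bound[OF s0 A c h2 h3(2)]]
    by simp
qed

lemma card_set_to_one_changed_le:
  assumes "finite X"
  shows "card {u. set_to_one s0 X $ u \<noteq> s0 $ u} \<le> card X"
  by (rule card_mono[OF assms]) (auto simp: set_to_one_def)

lemma feasible_F_eq_set_to_one:
  assumes "feasible_F s0 k s"
  shows "s = set_to_one s0 {u. s $ u \<noteq> s0 $ u}"
  using assms by (auto simp: feasible_F_def set_to_one_def vec_eq_iff)

lemma feasible_L_indicator:
  "feasible_L (card Y) (restr (vec 1) Y)"
  by (simp add: feasible_L_def restr_def)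

theorem theorem3p1:
  fixes W A :: "real^'n^'n" and k :: nat and c \<beta> \<gamma>1 \<gamma>2 \<gamma>3 :: real
    and eps :: "real^'n" and X :: "'n set"
  assumes graph: "weighted_graph W"
    and k: "1 \<le> k" "k \<le> CARD('n)"
    and A: "A = A_D W \<or> A = A_P W"
    and c: "0 \<le> c" "c < 1"
    and eps: "\<forall>u. - c \<le> eps $ u \<and> eps $ u \<le> 1 - c"
    and \<gamma>: "0 < \<gamma>1" "\<gamma>1 < 1" "0 < \<gamma>2" "\<gamma>2 < 1" "0 < \<gamma>3" "\<gamma>3 < 1"
    and h1: "\<forall>Y. card Y = k \<longrightarrow>
       (set_to_one (c *\<^sub>R vec 1 + eps) Y - (c *\<^sub>R vec 1 + eps)) \<bullet> (A *v (c *\<^sub>R vec 1 + eps))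
         \<ge> - \<gamma>1 * quad A (c *\<^sub>R vec 1 + eps)"
    and h2: "\<forall>Y. card Y = k \<longrightarrow> quad A (restr eps Y) \<le> \<gamma>2 * quad A (c *\<^sub>R vec 1 + eps)"
    and h3: "\<forall>Y. card Y = k \<longrightarrow>
       \<bar>restr eps Y \<bullet> (A *v restr (vec 1) Y)\<bar> \<le> \<gamma>3 * quad A (c *\<^sub>R vec 1 + eps)"
    and \<beta>: "0 < \<beta>" "\<beta> \<le> 1"
    and X: "beta_approx_L A k \<beta> X"
  shows "(\<forall>u. set_to_one (c *\<^sub>R vec 1 + eps) X $ u = (c *\<^sub>R vec 1 + eps) $ u
                \<or> set_to_one (c *\<^sub>R vec 1 + eps) X $ u = 1)
         \<and> card {u. set_to_one (c *\<^sub>R vec 1 + eps) X $ u \<noteq> (c *\<^sub>R vec 1 + eps) $ u} \<le> k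
         \<and> (\<forall>s. feasible_F (c *\<^sub>R vec 1 + eps) k s \<longrightarrow>
              quad A (set_to_one (c *\<^sub>R vec 1 + eps) X)
                \<ge> (1/4) * min \<beta> ((1 - 2*\<gamma>1 - 2*(1-c)*\<gamma>3) / (1 + 2*(1-c)*\<gamma>3 + \<gamma>2)) * quad A s)"
proof -
  define s0 where "s0 = c *\<^sub>R vec 1 + eps"
  note h = h1[folded s0_def] h2[folded s0_def] h3[folded s0_def]
  have psd: "pos_semidef A" using graph A by (rule opinion_matrix_pos_semidef)
  have card_X: "card X = k" using X by (simp add: beta_approx_L_def)
  have ratio: "min \<beta> ((1 - 2*\<gamma>1 - 2*(1-c)*\<gamma>3) / (1 + 2*(1-c)*\<gamma>3 + \<gamma>2)) * quad A s
      \<le> 2 * quad A (set_to_one s0 X)" if "feasible_F s0 k s" for s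
  proof -
    define Y where "Y = {u. s $ u \<noteq> s0 $ u}"
    have card_Y: "card Y = k" and s: "s = set_to_one s0 Y"
      using that feasible_F_eq_set_to_one by (auto simp: feasible_F_def Y_def)
    have "\<beta> * quad A (restr (vec 1) Y) \<le> quad A (restr (vec 1) X)"
      using X feasible_L_indicator[of Y] by (simp add: beta_approx_L_def card_Y)
    then show ?thesis
      unfolding s using quad_set_to_one_ratio[OF s0_def psd] c \<gamma> h card_X card_Y by simp
  qed
  show ?thesis
    unfolding s0_def[symmetric]
  proof (intro conjI allI impI)
    show "set_to_one s0 X $ u = s0 $ u \<or> set_to_one s0 X $ u = 1" for u
      by (simp add: set_to_one_def)
    show "card {u. set_to_one s0 X $ u \<noteq> s0 $ u} \<le> k"
      using card_set_to_one_changed_le[of X s0] card_X by simp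
    show "quad A (set_to_one s0 X) \<ge> 1/4 * min \<beta> ((1 - 2*\<gamma>1 - 2*(1-c)*\<gamma>3) / (1 + 2*(1-c)*\<gamma>3 + \<gamma>2)) * quad A s"
      if "feasible_F s0 k s" for s
      using ratio[OF that] pos_semidef_quad_nonneg[OF psd, of "set_to_one s0 X"]
      unfolding mult.assoc by argo
  qed
qed

end
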